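(* Let $N\ge1$, $\theta\in[0,1)$, and real numbers $a_0,\dots,a_N$ with $\sum_k a_k^2=1$. Define the probability distribution $\Pr(l)=\frac{1}{N+1}\bigl|\sum_{k=0}^N a_k e^{2\pi i k(\theta-l/(N+1))}\bigr|^2$ for $l=0,\dots,N$, and $W=\sum_{l=0}^N\Pr(l)\bigl[1-\cos\bigl(2\pi(\theta-\tfrac{l}{N+1})\bigr)\bigr]$. Then $W=1-\sum_{k=1}^N a_{k-1}a_k-a_0a_N\cos(2\pi(N+1)\theta)$. Consequently, if $a_0=0$ then $W$ is independent of $\theta$, and the minimum of $W$ over all real $a_1,\dots,a_N$ with $\sum_{k=1}^N a_k^2=1$ (and $a_0=0$) equals $2\sin^2\frac{\pi}{2N+2}$, attained at $a_k=\sqrt{\frac{2}{N+1}}\sin\frac{k\pi}{N+1}$.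
   Context: This $W$ is the expected value of $1-\cos(2\pi(\hat\theta-\theta))$ for the estimator $\hat\theta=l/(N+1)$ of the phase $\theta$ of $U=\mathrm{diag}(1,e^{2\pi i\theta})$ in the parallel entangled strategy with Fourier-basis measurement. *)

theory Defs
  imports Complex_Main
begin

definition Prob :: "nat \<Rightarrow> (nat \<Rightarrow> real) \<Rightarrow> real \<Rightarrow> nat \<Rightarrow> real" where
  "Prob N a \<theta> l = (1 / real (N + 1)) *
     (cmod (\<Sum>k=0..N. complex_of_real (a k) *
        cis (2 * pi * real k * (\<theta> - real l / real (N + 1))))) ^ 2"

definition W :: "nat \<Rightarrow> (nat \<Rightarrow> real) \<Rightarrow> real \<Rightarrow> real" where
  "W N a \<theta> = (\<Sum>l=0..N. Prob N a \<theta> l * (1 - cos (2 * pi * (\<theta> - real l / real (N + 1)))))"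

definition a_opt :: "nat \<Rightarrow> nat \<Rightarrow> real" where
  "a_opt N k = sqrt (2 / real (N + 1)) * sin (real k * pi / real (N + 1))"

end

theory Submission
  imports Defs "HOL-Library.Real_Mod"
begin

(* With A(w) = sum_k a_k e^(ikw) one has (1 - cos w) |A(w)|^2 = |(1 - e^(iw)) A(w)|^2 / 2, and
   (1 - e^(iw)) A(w) has the backward differences b_k = a_k - a_(k-1), k = 0..N+1, as coefficients.
   Averaging |sum_k b_k e^(ikw)|^2 over the N+1 equally spaced phases w_l = 2 pi (theta - l/(N+1))
   kills every cross term b_j b_k except the aliased pair {j, k} = {0, N+1}, so
   W = (sum_k b_k^2) / 2 + b_0 b_(N+1) cos (2 pi (N+1) theta), which expands to the formula.

   For a_0 = 0 it remains to maximise sum_k a_(k-1) a_k, half the quadratic form of the path graph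
   on 1..N. Its positive eigenvector is a_opt, with eigenvalue 2 cos (pi/(N+1)); weighted AM-GM with
   weights taken from this eigenvector bounds the form by cos (pi/(N+1)) sum_k a_k^2, and a_opt
   attains the bound. *)

lemma sum_cis_equispaced:
  fixes n :: nat and m :: int and \<theta> :: real
  assumes "n > 0"
  shows "(\<Sum>l<n. cis (2 * pi * m * (\<theta> - l / n))) =
    (if int n dvd m then of_nat n * cis (2 * pi * m * \<theta>) else 0)"
proof -
  define q where "q = cis (- 2 * pi * m / n)"
  have terms: "cis (2 * pi * m * (\<theta> - l / n)) = cis (2 * pi * m * \<theta>) * q ^ l" for l :: nat
    by (simp add: q_def DeMoivre cis_mult algebra_simps diff_divide_distrib)
  have q_pow: "q ^ n = 1"
  proof -
    have "q ^ n = cis (2 * pi * of_int (- m))"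
      using assms by (simp add: q_def DeMoivre)
    also have "\<dots> = 1"
      by (rule cis_multiple_2pi) simp
    finally show ?thesis .
  qed
  have q_eq_1: "q = 1 \<longleftrightarrow> int n dvd m"
  proof -
    have "- 2 * pi * m / n = of_int k * (2 * pi) \<longleftrightarrow> - m = k * int n" for k
    proof -
      have "- 2 * pi * m / n = of_int k * (2 * pi) \<longleftrightarrow> real_of_int (- m) = of_int (k * int n)"
        using assms by (simp add: field_simps) (metis minus_mult_right mult_cancel_left pi_neq_zero)
      then show ?thesis
        by (simp only: of_int_eq_iff)
    qed
    then have "q = 1 \<longleftrightarrow> (\<exists>k::int. - m = k * int n)"
      unfolding q_def cis_eq_1_iff by simp
    also have "\<dots> \<longleftrightarrow> int n dvd m"
      by (metis dvd_def dvd_minus_iff mult.commute)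
    finally show ?thesis .
  qed
  show ?thesis
  proof (cases "int n dvd m")
    case True
    then have "q = 1"
      using q_eq_1 by simp
    then show ?thesis
      by (simp add: terms True)
  next
    case False
    then have "(\<Sum>l<n. q ^ l) = 0"
      using q_eq_1 q_pow by (simp add: geometric_sum)
    then show ?thesis
      by (simp add: terms False flip: sum_distrib_left)
  qed
qed

lemma sum_cos_equispaced:
  fixes n :: nat and m :: int and \<theta> :: real
  assumes "n > 0"
  shows "(\<Sum>l<n. cos (m * (2 * pi * (\<theta> - l / n)))) =
    (if int n dvd m then n * cos (2 * pi * m * \<theta>) else 0)"
proof -
  have "(\<Sum>l<n. cos (m * (2 * pi * (\<theta> - l / n)))) = Re (\<Sum>l<n. cis (2 * pi * m * (\<theta> - l / n)))"
    by (simp add: mult_ac)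
  then show ?thesis
    using assms by (simp add: sum_cis_equispaced)
qed

lemma cmod_sum_cis_squared:
  fixes b :: "nat \<Rightarrow> real" and K :: "nat set" and x :: real
  shows "(cmod (\<Sum>k\<in>K. of_real (b k) * cis (k * x)))\<^sup>2 =
    (\<Sum>j\<in>K. \<Sum>k\<in>K. b j * b k * cos ((real j - real k) * x))"
proof -
  have "(cmod (\<Sum>k\<in>K. of_real (b k) * cis (k * x)))\<^sup>2 =
      (\<Sum>k\<in>K. b k * cos (k * x))\<^sup>2 + (\<Sum>k\<in>K. b k * sin (k * x))\<^sup>2"
    by (simp add: cmod_power2)
  also have "\<dots> = (\<Sum>j\<in>K. \<Sum>k\<in>K. b j * b k * (cos (j * x) * cos (k * x) + sin (j * x) * sin (k * x)))"
    by (simp add: power2_eq_square sum_product algebra_simps flip: sum.distrib)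
  finally show ?thesis
    by (simp add: cos_diff left_diff_distrib)
qed

lemma int_dvd_diff_iff:
  fixes j k n :: nat
  assumes "j \<le> n" "k \<le> n"
  shows "int n dvd (int j - int k) \<longleftrightarrow> j = k \<or> (j = 0 \<and> k = n) \<or> (j = n \<and> k = 0)"
proof
  assume "int n dvd (int j - int k)"
  then obtain t where t: "int j - int k = int n * t" ..
  consider "t = 0" | "t = 1" | "t = -1" | "t \<ge> 2" | "t \<le> -2"
    by linarith
  then show "j = k \<or> (j = 0 \<and> k = n) \<or> (j = n \<and> k = 0)"
  proof cases
    case 4
    then have "int n * 2 \<le> int n * t" by (intro mult_left_mono) auto
    then show ?thesis using t assms by auto
  next
    case 5
    then have "int n * t \<le> int n * (-2)" by (intro mult_left_mono) auto
    then show ?thesis using t assms by auto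
  qed (use t assms in auto)
qed auto

lemma sum_cmod_squared_equispaced:
  fixes b :: "nat \<Rightarrow> real" and n :: nat and \<theta> :: real
  assumes "n > 0"
  shows "(\<Sum>l<n. (cmod (\<Sum>k\<le>n. of_real (b k) * cis (k * (2 * pi * (\<theta> - l / n)))))\<^sup>2) =
    n * ((\<Sum>k\<le>n. (b k)\<^sup>2) + 2 * b 0 * b n * cos (2 * pi * n * \<theta>))"
proof -
  define C where "C = cos (2 * pi * n * \<theta>)"
  have aliasing: "b j * b k * (if int n dvd (int j - int k) then n * cos (2 * pi * (int j - int k) * \<theta>) else 0) =
      n * ((if j = k then (b j)\<^sup>2 else 0) + (if k = n then if j = 0 then b 0 * b n * C else 0 else 0)
        + (if k = 0 then if j = n then b 0 * b n * C else 0 else 0))"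
    if "j \<le> n" "k \<le> n" for j k
    using that assms by (auto simp: int_dvd_diff_iff C_def power2_eq_square)
  have "(\<Sum>l<n. (cmod (\<Sum>k\<le>n. of_real (b k) * cis (k * (2 * pi * (\<theta> - l / n)))))\<^sup>2) =
      (\<Sum>j\<le>n. \<Sum>k\<le>n. b j * b k * (\<Sum>l<n. cos ((int j - int k) * (2 * pi * (\<theta> - l / n)))))"
    by (simp add: cmod_sum_cis_squared sum_distrib_left sum.swap[of _ "{..<n}"])
  also have "\<dots> = (\<Sum>j\<le>n. \<Sum>k\<le>n. b j * b k *
      (if int n dvd (int j - int k) then n * cos (2 * pi * (int j - int k) * \<theta>) else 0))"
    using assms by (simp only: sum_cos_equispaced)
  also have "\<dots> = (\<Sum>j\<le>n. \<Sum>k\<le>n. n * ((if j = k then (b j)\<^sup>2 else 0)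
      + (if k = n then if j = 0 then b 0 * b n * C else 0 else 0) + (if k = 0 then if j = n then b 0 * b n * C else 0 else 0)))"
    by (intro sum.cong refl aliasing) auto
  also have "\<dots> = n * ((\<Sum>k\<le>n. (b k)\<^sup>2) + 2 * b 0 * b n * C)"
    by (simp add: sum.distrib sum_distrib_left[symmetric] algebra_simps)
  finally show ?thesis
    unfolding C_def .
qed

definition backward_diff :: "nat \<Rightarrow> (nat \<Rightarrow> real) \<Rightarrow> nat \<Rightarrow> real" where
  "backward_diff N a k = (if k \<le> N then a k else 0) - (if k = 0 then 0 else a (k - 1))"

lemma sum_backward_diff_power:
  fixes a :: "nat \<Rightarrow> real" and z :: complex
  shows "(\<Sum>k\<le>Suc N. of_real (backward_diff N a k) * z ^ k) = (1 - z) * (\<Sum>k\<le>N. of_real (a k) * z ^ k)"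
proof -
  have "(\<Sum>k\<le>Suc N. of_real (if k \<le> N then a k else 0) * z ^ k) = (\<Sum>k\<le>N. of_real (a k) * z ^ k)"
    by simp
  moreover have "(\<Sum>k\<le>Suc N. of_real (if k = 0 then 0 else a (k - 1)) * z ^ k) = z * (\<Sum>k\<le>N. of_real (a k) * z ^ k)"
    by (simp only: sum.atMost_Suc_shift) (simp add: sum_distrib_left mult_ac)
  ultimately show ?thesis
    by (simp add: backward_diff_def sum_subtractf left_diff_distrib)
qed

lemma sum_backward_diff_squared:
  fixes a :: "nat \<Rightarrow> real"
  shows "(\<Sum>k\<le>Suc N. (backward_diff N a k)\<^sup>2) = 2 * (\<Sum>k\<le>N. (a k)\<^sup>2) - 2 * (\<Sum>k=1..N. a (k - 1) * a k)"
proof -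
  define u where "u k = (if k \<le> N then a k else 0)" for k
  define v where "v k = (if k = 0 then 0 else a (k - 1))" for k
  have "(\<Sum>k\<le>Suc N. (u k)\<^sup>2) = (\<Sum>k\<le>N. (a k)\<^sup>2)"
    by (simp add: u_def)
  moreover have "(\<Sum>k\<le>Suc N. (v k)\<^sup>2) = (\<Sum>k\<le>N. (a k)\<^sup>2)"
    by (simp only: v_def sum.atMost_Suc_shift) simp
  moreover have "(\<Sum>k\<le>Suc N. u k * v k) = (\<Sum>k=1..N. a (k - 1) * a k)"
    by (simp add: u_def v_def atLeast0AtMost[symmetric] sum.atLeast_Suc_atMost mult.commute)
  moreover have "(\<Sum>k\<le>Suc N. (backward_diff N a k)\<^sup>2) =
      (\<Sum>k\<le>Suc N. (u k)\<^sup>2) + (\<Sum>k\<le>Suc N. (v k)\<^sup>2) - 2 * (\<Sum>k\<le>Suc N. u k * v k)"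
    unfolding backward_diff_def u_def[symmetric] v_def[symmetric] power2_diff mult.assoc
    by (simp only: sum.distrib sum_subtractf sum_distrib_left)
  ultimately show ?thesis
    by simp
qed

lemma cmod_one_minus_cis_squared: "(cmod (1 - cis x))\<^sup>2 = 2 * (1 - cos x)"
  by (simp add: cmod_power2 power2_diff)

lemma Prob_mult_one_minus_cos:
  fixes N l :: nat and a :: "nat \<Rightarrow> real" and \<theta> \<phi> :: real
  defines "\<phi> \<equiv> 2 * pi * (\<theta> - l / (N + 1))"
  shows "Prob N a \<theta> l * (1 - cos \<phi>) =
    (cmod (\<Sum>k\<le>Suc N. of_real (backward_diff N a k) * cis (k * \<phi>)))\<^sup>2 / (2 * real (N + 1))"
proof -
  define A where "A = (\<Sum>k\<le>N. of_real (a k) * cis \<phi> ^ k)"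
  have Prob: "Prob N a \<theta> l = (cmod A)\<^sup>2 / (N + 1)"
    by (simp add: Prob_def A_def \<phi>_def DeMoivre atLeast0AtMost mult_ac)
  have "(\<Sum>k\<le>Suc N. of_real (backward_diff N a k) * cis (k * \<phi>)) = (1 - cis \<phi>) * A"
    using sum_backward_diff_power[of N a "cis \<phi>"] by (simp only: A_def DeMoivre)
  then have B: "(cmod (\<Sum>k\<le>Suc N. of_real (backward_diff N a k) * cis (k * \<phi>)))\<^sup>2 = 2 * (1 - cos \<phi>) * (cmod A)\<^sup>2"
    by (simp only: norm_mult power_mult_distrib cmod_one_minus_cis_squared)
  show ?thesis
    unfolding Prob B by (simp add: field_simps del: of_nat_Suc)
qed

lemma W_formula:
  fixes a :: "nat \<Rightarrow> real"
  assumes "(\<Sum>k=0..N. (a k)\<^sup>2) = 1"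
  shows "W N a \<theta> = 1 - (\<Sum>k=1..N. a (k - 1) * a k) - a 0 * a N * cos (2 * pi * real (N + 1) * \<theta>)"
proof -
  have "W N a \<theta> = (\<Sum>l<Suc N. (cmod (\<Sum>k\<le>Suc N. of_real (backward_diff N a k) *
      cis (k * (2 * pi * (\<theta> - l / Suc N)))))\<^sup>2) / (2 * real (Suc N))"
    unfolding W_def atLeast0AtMost Suc_eq_plus1[symmetric] lessThan_Suc_atMost sum_divide_distrib
      Prob_mult_one_minus_cos[of N, unfolded Suc_eq_plus1[symmetric]] ..
  also have "\<dots> = ((\<Sum>k\<le>Suc N. (backward_diff N a k)\<^sup>2)
      + 2 * backward_diff N a 0 * backward_diff N a (Suc N) * cos (2 * pi * Suc N * \<theta>)) / 2"
    by (subst sum_cmod_squared_equispaced) (simp_all del: of_nat_Suc)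
  finally show ?thesis
    using assms unfolding sum_backward_diff_squared by (simp add: backward_diff_def atLeast0AtMost)
qed

lemma W_eq_of_head_zero:
  fixes a :: "nat \<Rightarrow> real"
  assumes "a 0 = 0" and "(\<Sum>k=1..N. (a k)\<^sup>2) = 1"
  shows "W N a \<theta> = 1 - (\<Sum>k=1..N. a (k - 1) * a k)"
proof -
  have "(\<Sum>k=0..N. (a k)\<^sup>2) = 1"
    using assms by (simp add: sum.atLeast_Suc_atMost)
  then show ?thesis
    using assms(1) by (simp add: W_formula)
qed

lemma sum_pred_shift:
  fixes g :: "nat \<Rightarrow> 'a::comm_monoid_add"
  shows "(\<Sum>k=1..N. g (k - 1)) + g N = g 0 + (\<Sum>k=1..N. g k)"
  by (induction N) (auto simp: add_ac)

lemma sum_adjacent_products_le: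
  fixes s a :: "nat \<Rightarrow> real" and c :: real
  assumes s_ends: "s 0 = 0" "s (Suc N) = 0"
    and s_pos: "\<And>k. k \<in> {1..N} \<Longrightarrow> 0 < s k"
    and s_eigen: "\<And>k. k \<in> {1..N} \<Longrightarrow> s (k - 1) + s (k + 1) = 2 * c * s k"
    and "a 0 = 0"
  shows "(\<Sum>k=1..N. a (k - 1) * a k) \<le> c * (\<Sum>k=1..N. (a k)\<^sup>2)"
proof -
  define g where "g k = s (k + 1) / s k * (a k)\<^sup>2" for k
  define h where "h k = s (k - 1) / s k * (a k)\<^sup>2" for k
  have weighted_amgm: "a (k - 1) * a k \<le> (g (k - 1) + h k) / 2" if k: "k \<in> {1..N}" for k
  proof (cases "k = 1")
    case True
    then show ?thesis using \<open>a 0 = 0\<close> s_ends by (simp add: g_def h_def)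
  next
    case False
    define r where "r = s k / s (k - 1)"
    have "k - 1 \<in> {1..N}"
      using k False by auto
    then have "0 < s k" "0 < s (k - 1)"
      using k s_pos by blast+
    then have "0 < r" and "g (k - 1) = r * (a (k - 1))\<^sup>2" and "h k = (a k)\<^sup>2 / r"
      using k False by (simp_all add: r_def g_def h_def)
    then have "(g (k - 1) + h k) / 2 - a (k - 1) * a k = (r * a (k - 1) - a k)\<^sup>2 / (2 * r)"
      by (simp add: power2_eq_square field_simps)
    moreover have "0 \<le> (r * a (k - 1) - a k)\<^sup>2 / (2 * r)"
      using \<open>0 < r\<close> by simp
    ultimately show ?thesis
      by linarith
  qed
  have "g 0 = 0" "g N = 0"
    using \<open>a 0 = 0\<close> s_ends by (simp_all add: g_def)
  then have g_shift: "(\<Sum>k=1..N. g (k - 1)) = (\<Sum>k=1..N. g k)"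
    using sum_pred_shift[of g N] by simp
  have "(\<Sum>k=1..N. a (k - 1) * a k) \<le> (\<Sum>k=1..N. (g (k - 1) + h k) / 2)"
    by (rule sum_mono) (rule weighted_amgm)
  also have "\<dots> = (\<Sum>k=1..N. (g k + h k) / 2)"
    using g_shift by (simp add: sum.distrib flip: sum_divide_distrib)
  also have "\<dots> = (\<Sum>k=1..N. c * (a k)\<^sup>2)"
  proof (rule sum.cong [OF refl])
    fix k assume k: "k \<in> {1..N}"
    then have "g k + h k = (s (k - 1) + s (k + 1)) / s k * (a k)\<^sup>2"
      by (simp add: g_def h_def add_divide_distrib distrib_right)
    then show "(g k + h k) / 2 = c * (a k)\<^sup>2"
      using s_pos[OF k] s_eigen[OF k] by simp
  qed
  finally show ?thesis
    by (simp add: sum_distrib_left)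
qed

lemma sum_adjacent_products_eigenvector:
  fixes s :: "nat \<Rightarrow> real" and c :: real
  assumes s_ends: "s 0 = 0" "s (Suc N) = 0"
    and s_eigen: "\<And>k. k \<in> {1..N} \<Longrightarrow> s (k - 1) + s (k + 1) = 2 * c * s k"
  shows "(\<Sum>k=1..N. s (k - 1) * s k) = c * (\<Sum>k=1..N. (s k)\<^sup>2)"
proof -
  have shift: "(\<Sum>k=1..N. s (k - 1) * s k) = (\<Sum>k=1..N. s k * s (k + 1))"
    using sum_pred_shift[of "\<lambda>k. s k * s (k + 1)" N] s_ends by simp
  have "2 * (\<Sum>k=1..N. s (k - 1) * s k) = (\<Sum>k=1..N. s k * (s (k - 1) + s (k + 1)))"
    by (subst mult_2, subst (2) shift) (simp add: algebra_simps flip: sum.distrib)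
  also have "\<dots> = (\<Sum>k=1..N. 2 * (c * (s k)\<^sup>2))"
    using s_eigen by (intro sum.cong refl) (simp add: power2_eq_square algebra_simps)
  also have "\<dots> = 2 * (c * (\<Sum>k=1..N. (s k)\<^sup>2))"
    by (simp add: sum_distrib_left)
  finally show ?thesis
    by simp
qed

lemma sin_pred_plus_sin_succ:
  fixes k :: nat and x :: real
  assumes "1 \<le> k"
  shows "sin (real (k - 1) * x) + sin (real (k + 1) * x) = 2 * cos x * sin (k * x)"
proof -
  have "real (k - 1) * x = k * x - x" "real (k + 1) * x = k * x + x"
    using assms by (simp_all add: algebra_simps)
  then show ?thesis
    by (simp add: sin_add sin_diff)
qed

lemma sum_sin_squared_equispaced:
  fixes n :: nat
  assumes "2 \<le> n"
  shows "(\<Sum>k<n. (sin (k * pi / n))\<^sup>2) = n / 2"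
proof -
  have "(\<Sum>k<n. cos ((1::int) * (2 * pi * (0 - k / n)))) = 0"
    using assms by (subst sum_cos_equispaced) auto
  then have cos_sum: "(\<Sum>k<n. cos (2 * (k * pi / n))) = 0"
    by (simp add: mult_ac)
  have "(\<Sum>k<n. (sin (k * pi / n))\<^sup>2) = (\<Sum>k<n. (1 - cos (2 * (k * pi / n))) / 2)"
    by (simp only: cos_double_sin) simp
  also have "\<dots> = n / 2"
    using cos_sum by (simp add: sum_subtractf flip: sum_divide_distrib)
  finally show ?thesis .
qed

lemma a_opt_sum_squares:
  assumes "N \<ge> 1"
  shows "(\<Sum>k=1..N. (a_opt N k)\<^sup>2) = 1"
proof -
  have "(\<Sum>k=1..N. (sin (k * pi / (N + 1)))\<^sup>2) = (\<Sum>k<Suc N. (sin (k * pi / Suc N))\<^sup>2)"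
    by (simp add: lessThan_Suc_atMost atLeast0AtMost[symmetric] sum.atLeast_Suc_atMost)
  also have "\<dots> = (N + 1) / 2"
    using assms by (subst sum_sin_squared_equispaced) auto
  finally have sin_sum: "(\<Sum>k=1..N. (sin (k * pi / (N + 1)))\<^sup>2) = (N + 1) / 2" .
  have "(\<Sum>k=1..N. (a_opt N k)\<^sup>2) = 2 / (N + 1) * (\<Sum>k=1..N. (sin (k * pi / (N + 1)))\<^sup>2)"
    by (simp add: a_opt_def power_mult_distrib sum_distrib_left)
  then show ?thesis
    using sin_sum by simp
qed

lemma a_opt_eigen:
  assumes "k \<in> {1..N}"
  shows "a_opt N (k - 1) + a_opt N (k + 1) = 2 * cos (pi / (N + 1)) * a_opt N k"
  using sin_pred_plus_sin_succ[of k "pi / (N + 1)"] assms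
  by (simp add: a_opt_def algebra_simps flip: distrib_left)

lemma a_opt_pos:
  assumes "k \<in> {1..N}"
  shows "0 < a_opt N k"
proof -
  have "real k / (N + 1) < 1"
    using assms by simp
  then have "k * pi / (N + 1) < pi"
    by (simp add: pos_divide_less_eq)
  then have "0 < sin (k * pi / (N + 1))"
    using assms by (intro sin_gt_zero) auto
  then show ?thesis
    by (simp add: a_opt_def)
qed

lemma a_opt_ends: "a_opt N 0 = 0" "a_opt N (Suc N) = 0"
  by (simp_all add: a_opt_def del: of_nat_Suc)

lemma W_ge_of_head_zero:
  fixes a :: "nat \<Rightarrow> real"
  assumes "a 0 = 0" and "(\<Sum>k=1..N. (a k)\<^sup>2) = 1"
  shows "1 - cos (pi / (N + 1)) \<le> W N a \<theta>"
proof -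
  have "(\<Sum>k=1..N. a (k - 1) * a k) \<le> cos (pi / (N + 1)) * (\<Sum>k=1..N. (a k)\<^sup>2)"
    using a_opt_ends a_opt_pos a_opt_eigen \<open>a 0 = 0\<close> by (rule sum_adjacent_products_le)
  then show ?thesis
    using assms by (simp add: W_eq_of_head_zero)
qed

lemma W_a_opt:
  assumes "N \<ge> 1"
  shows "W N (a_opt N) \<theta> = 1 - cos (pi / (N + 1))"
proof -
  have "(\<Sum>k=1..N. a_opt N (k - 1) * a_opt N k) = cos (pi / (N + 1)) * (\<Sum>k=1..N. (a_opt N k)\<^sup>2)"
    using a_opt_ends a_opt_eigen by (rule sum_adjacent_products_eigenvector)
  then show ?thesis
    using W_eq_of_head_zero[OF a_opt_ends(1) a_opt_sum_squares[OF assms]] a_opt_sum_squares[OF assms]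
    by simp
qed

theorem mainTheorem6:
  fixes N :: nat and \<theta> :: real
  assumes "N \<ge> 1" and "0 \<le> \<theta>" and "\<theta> < 1"
  shows "(\<forall>a. (\<Sum>k=0..N. (a k)^2) = 1 \<longrightarrow>
            W N a \<theta> = 1 - (\<Sum>k=1..N. a (k - 1) * a k) - a 0 * a N * cos (2 * pi * real (N + 1) * \<theta>))
       \<and> (\<forall>a \<theta>'. (\<Sum>k=0..N. (a k)^2) = 1 \<and> a 0 = 0 \<and> 0 \<le> \<theta>' \<and> \<theta>' < 1 \<longrightarrow>
            W N a \<theta>' = W N a \<theta>)
       \<and> (\<forall>a. a 0 = 0 \<and> (\<Sum>k=1..N. (a k)^2) = 1 \<longrightarrow>
                 2 * (sin (pi / real (2 * N + 2)))^2 \<le> W N a \<theta>)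
       \<and> a_opt N 0 = 0 \<and> (\<Sum>k=1..N. (a_opt N k)^2) = 1
       \<and> W N (a_opt N) \<theta> = 2 * (sin (pi / real (2 * N + 2)))^2"
proof -
  have half_angle: "1 - cos (pi / real (N + 1)) = 2 * (sin (pi / real (2 * N + 2)))\<^sup>2"
  proof -
    have "pi / real (N + 1) = 2 * (pi / real (2 * N + 2))"
      by (simp add: field_simps)
    then show ?thesis
      by (simp only: cos_double_sin)
  qed
  have phase_invariance: "W N a \<theta>' = W N a \<theta>" if "(\<Sum>k=0..N. (a k)\<^sup>2) = 1" and "a 0 = 0" for a \<theta>'
    using that by (simp add: W_formula)
  show ?thesis
    unfolding half_angle[symmetric]
    using W_formula phase_invariance W_ge_of_head_zero W_a_opt[OF assms(1)] a_opt_ends(1)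
      a_opt_sum_squares[OF assms(1)]
    by blast
qed

end
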